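(* Let $d\ge1$, $\sigma>0$ and $\theta\in\mathbb{R}^d$ with $\|\theta\|_2^2\le\frac{5\sigma^2}{8}$. Let $V=(V_1,\dots,V_d)\sim\mathcal N(0,I_d)$ and define the $d\times d$ matrix $$F_\theta:=\mathbb{E}\left[\int_0^1\frac{VV^\top}{\big(\exp(-u\|\theta\|_2V_1/\sigma)+\exp(u\|\theta\|_2V_1/\sigma)\big)^2}\,du\right].$$ Then for all $j\in[d]$, $$[F_\theta]_{jj}\ge [F_\theta]_{11}\ge \frac{1}{4\big(1+2\|\theta\|_2^2/\sigma^2\big)}.$$ *)

theory Defs
  imports "HOL-Probability.Probability"
begin

definition std_normal_measure :: "real measure" where
  "std_normal_measure = density lborel (\<lambda>x. ennreal (std_normal_density x))"

text \<open>Law of V ~ N(0, I_d): coordinates indexed by {..<d}; index 0 plays the role of coordinate 1.\<close>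
definition gauss_d :: "nat \<Rightarrow> (nat \<Rightarrow> real) measure" where
  "gauss_d d = PiM {..<d} (\<lambda>_. std_normal_measure)"

definition norm_d :: "nat \<Rightarrow> (nat \<Rightarrow> real) \<Rightarrow> real" where
  "norm_d d \<theta> = sqrt (\<Sum>i<d. (\<theta> i)\<^sup>2)"

definition F_entry :: "nat \<Rightarrow> real \<Rightarrow> (nat \<Rightarrow> real) \<Rightarrow> nat \<Rightarrow> nat \<Rightarrow> real" where
  "F_entry d \<sigma> \<theta> j k =
     (\<integral>V. (LBINT u=0..1.
        V j * V k / (exp (- u * norm_d d \<theta> * V 0 / \<sigma>) + exp (u * norm_d d \<theta> * V 0 / \<sigma>))\<^sup>2)
      \<partial>gauss_d d)"

end

theory Submission
  imports Defs
begin

text \<open>Writing \<open>q t = 1 / (exp (- t) + exp t)\<^sup>2\<close> and \<open>c = \<parallel>\<theta>\<parallel> / \<sigma>\<close>, the diagonal entries are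
  Gaussian expectations of \<open>V\<^sub>j\<^sup>2 m(V\<^sub>1)\<close> with \<open>m(x) = \<integral>\<^sub>0\<^sup>1 q(u c x) du\<close>. By independence
  \<open>F\<^sub>j\<^sub>j = E[m(X)]\<close> for \<open>j \<noteq> 1\<close> and \<open>F\<^sub>1\<^sub>1 = E[X\<^sup>2 m(X)]\<close>; since \<open>m\<close> decreases in \<open>|x|\<close> while
  \<open>E[X\<^sup>2] = 1\<close>, Chebyshev's sum inequality gives \<open>F\<^sub>1\<^sub>1 \<le> F\<^sub>j\<^sub>j\<close>. For the lower bound,
  \<open>cosh t \<le> exp (t\<^sup>2 / 2)\<close> gives \<open>q t \<ge> exp (- t\<^sup>2) / 4\<close>, Jensen gives
  \<open>m(x) \<ge> exp (- c\<^sup>2 x\<^sup>2 / 3) / 4\<close>, and the resulting Gaussian integral equals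
  \<open>(1 + 2 c\<^sup>2 / 3)\<^sup>-\<^sup>3\<^sup>/\<^sup>2 / 4\<close>, which dominates \<open>1 / (4 (1 + 2 c\<^sup>2))\<close> as long as \<open>c\<^sup>2 \<le> 5 / 8\<close>.\<close>

lemma tanh_real_le_self:
  fixes t :: real
  assumes "0 \<le> t"
  shows "tanh t \<le> t"
proof -
  have "(\<lambda>x. x - tanh x) 0 \<le> (\<lambda>x. x - tanh x) t"
  proof (rule DERIV_nonneg_imp_nondecreasing[OF assms])
    fix x :: real
    have "cosh x \<noteq> 0"
      using cosh_real_pos[of x] by simp
    then have "((\<lambda>x. x - tanh x) has_real_derivative 1 - (1 - (tanh x)\<^sup>2)) (at x)"
      by (intro derivative_eq_intros) auto
    then show "\<exists>y. ((\<lambda>x. x - tanh x) has_real_derivative y) (at x) \<and> 0 \<le> y"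
      by auto
  qed
  then show ?thesis
    by simp
qed

lemma cosh_le_exp_half_sq:
  fixes t :: real
  shows "cosh t \<le> exp (t\<^sup>2 / 2)"
proof -
  have "ln (cosh \<bar>t\<bar>) \<le> \<bar>t\<bar>\<^sup>2 / 2"
  proof -
    have "(\<lambda>x. x\<^sup>2 / 2 - ln (cosh x)) 0 \<le> (\<lambda>x. x\<^sup>2 / 2 - ln (cosh x)) \<bar>t\<bar>"
    proof (rule DERIV_nonneg_imp_nondecreasing[of 0])
      fix x :: real
      assume "0 \<le> x"
      then have "0 \<le> x - sinh x / cosh x"
        using tanh_real_le_self by (simp add: tanh_def)
      moreover have "((\<lambda>x. x\<^sup>2 / 2 - ln (cosh x)) has_real_derivative x - sinh x / cosh x) (at x)"
        using cosh_real_pos[of x] by (auto intro!: derivative_eq_intros)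
      ultimately show "\<exists>y. ((\<lambda>x. x\<^sup>2 / 2 - ln (cosh x)) has_real_derivative y) (at x) \<and> 0 \<le> y"
        by blast
    qed simp
    then show ?thesis
      by simp
  qed
  then have "exp (ln (cosh t)) \<le> exp (t\<^sup>2 / 2)"
    by (simp only: cosh_real_abs power2_abs exp_le_cancel_iff)
  then show ?thesis
    using cosh_real_pos[of t] by simp
qed

definition quarter_sech_sq :: "real \<Rightarrow> real" where
  "quarter_sech_sq t = 1 / (exp (- t) + exp t)\<^sup>2"

lemma quarter_sech_sq_cosh: "quarter_sech_sq t = 1 / (4 * (cosh t)\<^sup>2)"
proof -
  have "exp (- t) + exp t = 2 * cosh t"
    by (simp add: cosh_def)
  then show ?thesis
    by (simp add: quarter_sech_sq_def power_mult_distrib)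
qed

lemma quarter_sech_sq_pos: "0 < quarter_sech_sq t"
  by (simp add: quarter_sech_sq_cosh)

lemma quarter_sech_sq_antimono:
  assumes "\<bar>s\<bar> \<le> \<bar>t\<bar>"
  shows "quarter_sech_sq t \<le> quarter_sech_sq s"
proof -
  have "cosh s \<le> cosh t"
    using assms cosh_real_nonneg_le_iff[of "\<bar>s\<bar>" "\<bar>t\<bar>"] by simp
  then have "(cosh s)\<^sup>2 \<le> (cosh t)\<^sup>2"
    using cosh_real_pos[of s] by (intro power_mono) auto
  then show ?thesis
    unfolding quarter_sech_sq_cosh using cosh_real_pos[of s] by (intro divide_left_mono) auto
qed

lemma quarter_sech_sq_le: "quarter_sech_sq t \<le> 1 / 4"
  using quarter_sech_sq_antimono[of 0 t] by (simp add: quarter_sech_sq_cosh)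

lemma exp_neg_sq_le_quarter_sech_sq: "exp (- t\<^sup>2) / 4 \<le> quarter_sech_sq t"
proof -
  have "(cosh t)\<^sup>2 \<le> (exp (t\<^sup>2 / 2))\<^sup>2"
    using cosh_le_exp_half_sq[of t] cosh_real_pos[of t] by (intro power_mono) auto
  also have "\<dots> = exp (t\<^sup>2)"
    by (simp add: power2_eq_square flip: exp_add)
  finally have "1 / (4 * exp (t\<^sup>2)) \<le> 1 / (4 * (cosh t)\<^sup>2)"
    using cosh_real_pos[of t] by (intro divide_left_mono) auto
  moreover have "exp (- t\<^sup>2) / 4 = 1 / (4 * exp (t\<^sup>2))"
    by (simp add: exp_minus inverse_eq_divide)
  ultimately show ?thesis
    by (simp add: quarter_sech_sq_cosh)
qed

lemma continuous_on_quarter_sech_sq [continuous_intros]: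
  "continuous_on S f \<Longrightarrow> continuous_on S (\<lambda>x. quarter_sech_sq (f x))"
  unfolding quarter_sech_sq_cosh
  by (intro continuous_intros) (use cosh_real_pos in \<open>auto simp: power2_eq_square\<close>)

lemma interval_integral_01_mono:
  fixes f g :: "real \<Rightarrow> real"
  assumes "continuous_on {0..1} f" "continuous_on {0..1} g"
    and "\<And>u. 0 \<le> u \<Longrightarrow> u \<le> 1 \<Longrightarrow> f u \<le> g u"
  shows "(LBINT u=0..1. f u) \<le> (LBINT u=0..1. g u)"
proof -
  have "set_integrable lborel {0<..<1} f" "set_integrable lborel {0<..<1} g"
    using interval_integrable_continuous_on[of 0 1 f] interval_integrable_continuous_on[of 0 1 g]
      assms(1,2)
    by (simp_all add: interval_lebesgue_integrable_def zero_ereal_def one_ereal_def)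
  then show ?thesis
    using assms(3)
    by (simp add: interval_lebesgue_integral_le_eq zero_ereal_def one_ereal_def)
      (intro set_integral_mono; auto)
qed

text \<open>Jensen's inequality for \<open>exp\<close>: the tangent line of \<open>exp\<close> at \<open>- y\<^sup>2 / 3\<close>, the mean of
  \<open>- (u * y)\<^sup>2\<close> over \<open>u \<in> [0, 1]\<close>, is integrated exactly.\<close>
lemma exp_neg_sq_avg_ge: "exp (- y\<^sup>2 / 3) \<le> (LBINT u=0..1. exp (- (u * y)\<^sup>2))"
proof -
  define p where "p u = exp (- y\<^sup>2 / 3) * (1 + (y\<^sup>2 / 3 - (u * y)\<^sup>2))" for u
  define P where "P u = exp (- y\<^sup>2 / 3) * ((1 + y\<^sup>2 / 3) * u - y\<^sup>2 * u ^ 3 / 3)" for u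
  have "(P has_real_derivative p u) (at u)" for u
    unfolding P_def p_def
    by (rule derivative_eq_intros refl | simp)+ (simp add: power2_eq_square field_simps)
  moreover have "continuous_on {0..1} p"
    unfolding p_def by (intro continuous_intros)
  ultimately have "(LBINT u=0..1. p u) = P 1 - P 0"
    using interval_integral_FTC_finite[of 0 1 p P]
    by (auto simp: zero_ereal_def one_ereal_def has_field_derivative_at_within
        simp flip: has_real_derivative_iff_has_vector_derivative)
  also have "\<dots> = exp (- y\<^sup>2 / 3)"
    by (simp add: P_def field_simps)
  finally have "exp (- y\<^sup>2 / 3) = (LBINT u=0..1. p u)" ..
  also have "\<dots> \<le> (LBINT u=0..1. exp (- (u * y)\<^sup>2))"
  proof (rule interval_integral_01_mono)
    fix u :: real
    have "p u \<le> exp (- y\<^sup>2 / 3) * exp (y\<^sup>2 / 3 - (u * y)\<^sup>2)"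
      unfolding p_def by (intro mult_left_mono exp_ge_add_one_self) simp
    also have "\<dots> = exp (- (u * y)\<^sup>2)"
      by (simp flip: exp_add)
    finally show "p u \<le> exp (- (u * y)\<^sup>2)" .
  qed (auto simp: p_def intro!: continuous_intros)
  finally show ?thesis .
qed

lemma interval_integral_01_const: "(LBINT u=0..1. c) = (c :: real)"
  using interval_integral_const(2)[of c 0 1] by (simp add: zero_ereal_def one_ereal_def)

definition quarter_sech_sq_mean :: "real \<Rightarrow> real \<Rightarrow> real" where
  "quarter_sech_sq_mean c x = (LBINT u=0..1. quarter_sech_sq (u * c * x))"

lemma quarter_sech_sq_mean_measurable [measurable]:
  "quarter_sech_sq_mean c \<in> borel_measurable borel"
proof -
  have "quarter_sech_sq_mean c =
      (\<lambda>x. \<integral>u. indicator (einterval 0 1) u *\<^sub>R quarter_sech_sq (u * c * x) \<partial>lborel)"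
    by (simp add: fun_eq_iff quarter_sech_sq_mean_def interval_lebesgue_integral_le_eq
        set_lebesgue_integral_def)
  then show ?thesis
    by (simp add: quarter_sech_sq_def)
qed

lemma quarter_sech_sq_mean_nonneg: "0 \<le> quarter_sech_sq_mean c x"
proof -
  have "(LBINT u=0..1. 0) \<le> quarter_sech_sq_mean c x"
    unfolding quarter_sech_sq_mean_def
    by (rule interval_integral_01_mono) (intro continuous_intros less_imp_le quarter_sech_sq_pos)+
  then show ?thesis
    by (simp only: interval_integral_01_const)
qed

lemma quarter_sech_sq_mean_le: "quarter_sech_sq_mean c x \<le> 1 / 4"
proof -
  have "quarter_sech_sq_mean c x \<le> (LBINT u=0..1. 1 / 4)"
    unfolding quarter_sech_sq_mean_def
    by (rule interval_integral_01_mono) (intro continuous_intros quarter_sech_sq_le)+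
  then show ?thesis
    by (simp only: interval_integral_01_const)
qed

lemma quarter_sech_sq_mean_antimono:
  assumes "\<bar>x\<bar> \<le> \<bar>x'\<bar>"
  shows "quarter_sech_sq_mean c x' \<le> quarter_sech_sq_mean c x"
  unfolding quarter_sech_sq_mean_def
proof (rule interval_integral_01_mono)
  fix u :: real
  assume "0 \<le> u"
  then have "\<bar>u * c * x\<bar> \<le> \<bar>u * c * x'\<bar>"
    using assms by (simp add: abs_mult mult_left_mono)
  then show "quarter_sech_sq (u * c * x') \<le> quarter_sech_sq (u * c * x)"
    by (rule quarter_sech_sq_antimono)
qed (auto intro!: continuous_intros)

lemma quarter_sech_sq_mean_ge: "exp (- (c * x)\<^sup>2 / 3) / 4 \<le> quarter_sech_sq_mean c x"
proof -
  have "exp (- (c * x)\<^sup>2 / 3) / 4 \<le> (LBINT u=0..1. exp (- (u * (c * x))\<^sup>2)) / 4"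
    using exp_neg_sq_avg_ge[of "c * x"] by simp
  also have "\<dots> = (LBINT u=0..1. exp (- (u * c * x)\<^sup>2) / 4)"
    by (simp add: mult.assoc)
  also have "\<dots> \<le> quarter_sech_sq_mean c x"
    unfolding quarter_sech_sq_mean_def
  proof (rule interval_integral_01_mono)
    show "exp (- (u * c * x)\<^sup>2) / 4 \<le> quarter_sech_sq (u * c * x)" for u
      by (rule exp_neg_sq_le_quarter_sech_sq)
  qed (intro continuous_intros | simp)+
  finally show ?thesis .
qed

lemma prob_space_std_normal_measure: "prob_space std_normal_measure"
  unfolding std_normal_measure_def
  by (rule prob_spaceI) (simp add: emeasure_density nn_integral_eq_integral)

lemma sets_std_normal_measure [measurable_cong]: "sets std_normal_measure = sets borel"
  by (simp add: std_normal_measure_def)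

lemma integral_std_normal_measure:
  "f \<in> borel_measurable borel \<Longrightarrow>
    integral\<^sup>L std_normal_measure f = (\<integral>x. std_normal_density x * f x \<partial>lborel)"
  unfolding std_normal_measure_def by (subst integral_density) auto

lemma integrable_std_normal_measure_iff:
  "f \<in> borel_measurable borel \<Longrightarrow>
    integrable std_normal_measure f \<longleftrightarrow> integrable lborel (\<lambda>x. std_normal_density x * f x)"
  unfolding std_normal_measure_def by (subst integrable_density) auto

lemma has_bochner_integral_std_normal_measure:
  "f \<in> borel_measurable borel \<Longrightarrow>
    has_bochner_integral lborel (\<lambda>x. std_normal_density x * f x) I \<Longrightarrow>
    has_bochner_integral std_normal_measure f I"
  by (simp add: has_bochner_integral_iff integrable_std_normal_measure_iff
      integral_std_normal_measure)

lemma has_bochner_integral_std_normal_sq: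
  "has_bochner_integral std_normal_measure (\<lambda>x. x * x) 1"
  using std_normal_moment_even[of 1]
  by (intro has_bochner_integral_std_normal_measure) (simp_all add: power2_eq_square)

text \<open>Up to normalization, \<open>std_normal_density x * exp (- a * x\<^sup>2)\<close> is the density of
  \<open>N(0, s\<^sup>2)\<close> with \<open>s = 1 / sqrt (1 + 2 * a)\<close>, whose second moment is \<open>s\<^sup>2\<close>.\<close>
lemma has_bochner_integral_std_normal_sq_exp:
  fixes a :: real
  assumes "0 \<le> a"
  shows "has_bochner_integral std_normal_measure (\<lambda>x. x * x * exp (- a * x\<^sup>2))
    ((1 / sqrt (1 + 2 * a)) ^ 3)"
proof (rule has_bochner_integral_std_normal_measure)
  define s where "s = 1 / sqrt (1 + 2 * a)"
  have s: "0 < s" "s\<^sup>2 = 1 / (1 + 2 * a)"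
    using assms by (simp_all add: s_def power_divide)
  have "std_normal_density x * (x * x * exp (- a * x\<^sup>2)) = s * (normal_density 0 s x * (x - 0) ^ (2 * 1))"
    for x
  proof -
    have "- (x - 0)\<^sup>2 / (2 * s\<^sup>2) = - x\<^sup>2 / 2 + - a * x\<^sup>2"
      using assms by (simp add: s field_simps)
    moreover have "sqrt (2 * pi * s\<^sup>2) = sqrt (2 * pi) * s"
      using s(1) by (simp only: real_sqrt_mult real_sqrt_abs abs_of_pos)
    ultimately have "normal_density 0 s x = exp (- x\<^sup>2 / 2) * exp (- a * x\<^sup>2) / (sqrt (2 * pi) * s)"
      by (simp add: normal_density_def exp_add[symmetric])
    then show ?thesis
      using s by (simp add: std_normal_density_def power2_eq_square field_simps)
  qed
  moreover have "has_bochner_integral lborel (\<lambda>x. s * (normal_density 0 s x * (x - 0) ^ (2 * 1)))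
      (s * (fact (2 * 1) / ((2 / s\<^sup>2) ^ 1 * fact 1)))"
    using s by (intro has_bochner_integral_mult_right normal_moment_even)
  moreover have "s * (fact (2 * 1) / ((2 / s\<^sup>2) ^ 1 * fact 1)) = s ^ 3"
    using s(1) by (simp add: power2_eq_square power3_eq_cube)
  ultimately show "has_bochner_integral lborel
      (\<lambda>x. std_normal_density x * (x * x * exp (- a * x\<^sup>2))) ((1 / sqrt (1 + 2 * a)) ^ 3)"
    by (simp add: s_def)
qed simp

lemma integrable_std_normal_sq: "integrable std_normal_measure (\<lambda>x. x * x)"
  and integral_std_normal_sq: "(\<integral>x. x * x \<partial>std_normal_measure) = 1"
  using has_bochner_integral_std_normal_sq by (simp_all add: has_bochner_integral_iff)

text \<open>Chebyshev's sum inequality for the comonotone pair \<open>1 - x\<^sup>2\<close>, \<open>g x\<close>: their product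
  lies above \<open>(1 - x\<^sup>2) * g 1\<close>, whose integral vanishes since \<open>E[X\<^sup>2] = 1\<close>.\<close>
lemma integral_std_normal_sq_mult_le:
  fixes g :: "real \<Rightarrow> real"
  assumes "integrable std_normal_measure g" "integrable std_normal_measure (\<lambda>x. x * x * g x)"
    and "\<And>x x'. \<bar>x\<bar> \<le> \<bar>x'\<bar> \<Longrightarrow> g x' \<le> g x"
  shows "(\<integral>x. x * x * g x \<partial>std_normal_measure) \<le> integral\<^sup>L std_normal_measure g"
proof -
  interpret prob_space std_normal_measure
    by (rule prob_space_std_normal_measure)
  have "(1 - x * x) * (g x - g 1) \<ge> 0" for x
  proof (cases "\<bar>x\<bar> \<le> 1")
    case True
    then have "\<bar>x\<bar> * \<bar>x\<bar> \<le> 1 * 1"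
      by (intro mult_mono) auto
    then have "x * x \<le> 1"
      by (simp only: abs_mult_self_eq mult_1)
    with True assms(3)[of x 1] show ?thesis
      by simp
  next
    case False
    then have "1 * 1 \<le> \<bar>x\<bar> * \<bar>x\<bar>"
      by (intro mult_mono) auto
    then have "1 \<le> x * x"
      by (simp only: abs_mult_self_eq mult_1)
    with False assms(3)[of 1 x] show ?thesis
      by (intro mult_nonpos_nonpos) auto
  qed
  then have "0 \<le> (\<integral>x. (1 - x * x) * (g x - g 1) \<partial>std_normal_measure)"
    by (intro integral_nonneg_AE) simp
  also have "\<dots> = (\<integral>x. (g x - x * x * g x) + g 1 * (x * x - 1) \<partial>std_normal_measure)"
    by (simp add: algebra_simps)
  also have "\<dots> = integral\<^sup>L std_normal_measure g - (\<integral>x. x * x * g x \<partial>std_normal_measure)"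
    using assms(1,2) integrable_std_normal_sq
    by (simp add: integral_std_normal_sq prob_space)
  finally show ?thesis
    by simp
qed

lemma integrable_std_normal_quarter_sech_sq_mean:
  "integrable std_normal_measure (quarter_sech_sq_mean c)"
proof -
  interpret prob_space std_normal_measure
    by (rule prob_space_std_normal_measure)
  show ?thesis
    using quarter_sech_sq_mean_nonneg quarter_sech_sq_mean_le
    by (intro integrable_const_bound[where B = "1 / 4"]) auto
qed

lemma integrable_std_normal_sq_quarter_sech_sq_mean:
  "integrable std_normal_measure (\<lambda>x. x * x * quarter_sech_sq_mean c x)"
proof (rule Bochner_Integration.integrable_bound[OF integrable_std_normal_sq])
  show "AE x in std_normal_measure. norm (x * x * quarter_sech_sq_mean c x) \<le> norm (x * x)"
  proof (intro AE_I2)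
    fix x :: real
    have "x * x * quarter_sech_sq_mean c x \<le> x * x"
      using quarter_sech_sq_mean_le[of c x] by (intro mult_left_le) auto
    then show "norm (x * x * quarter_sech_sq_mean c x) \<le> norm (x * x)"
      using quarter_sech_sq_mean_nonneg[of c x] by simp
  qed
qed simp

text \<open>With \<open>r = sqrt (1 + 2 * a)\<close> the claim reads \<open>r\<^sup>3 \<le> 3 * r\<^sup>2 - 2\<close>, i.e.
  \<open>(r - 1) * (r\<^sup>2 - 2 * r - 2) \<le> 0\<close>, which holds for \<open>1 \<le> r\<^sup>2 \<le> 17 / 12\<close>.\<close>
lemma inverse_one_plus_six_le_cube:
  fixes a :: real
  assumes "0 \<le> a" "a \<le> 5 / 24"
  shows "1 / (1 + 6 * a) \<le> (1 / sqrt (1 + 2 * a)) ^ 3"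
proof -
  define r where "r = sqrt (1 + 2 * a)"
  have r: "1 \<le> r" "r\<^sup>2 = 1 + 2 * a"
    using assms(1) by (simp_all add: r_def)
  have "(r - 1) * (r\<^sup>2 - 2 * r - 2) \<le> 0"
    using r assms(2) by (intro mult_nonneg_nonpos) auto
  then have "r ^ 3 \<le> 1 + 6 * a"
    using r(2) by (simp add: algebra_simps power2_eq_square power3_eq_cube)
  then have "1 / (1 + 6 * a) \<le> 1 / r ^ 3"
    using r(1) assms(1) by (intro divide_left_mono mult_pos_pos) auto
  then show ?thesis
    by (simp add: r_def power_one_over)
qed

lemma integral_std_normal_sq_quarter_sech_sq_mean_ge:
  fixes c :: real
  assumes "c\<^sup>2 \<le> 5 / 8"
  shows "1 / (4 * (1 + 2 * c\<^sup>2)) \<le> (\<integral>x. x * x * quarter_sech_sq_mean c x \<partial>std_normal_measure)"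
proof -
  define a where "a = c\<^sup>2 / 3"
  have a: "0 \<le> a" "a \<le> 5 / 24"
    using assms by (simp_all add: a_def)
  have "1 / (4 * (1 + 2 * c\<^sup>2)) = 1 / (1 + 6 * a) / 4"
    by (simp add: a_def)
  also have "\<dots> \<le> (1 / sqrt (1 + 2 * a)) ^ 3 / 4"
    by (rule divide_right_mono[OF inverse_one_plus_six_le_cube[OF a]]) simp
  also have "\<dots> = (\<integral>x. x * x * exp (- a * x\<^sup>2) / 4 \<partial>std_normal_measure)"
    using has_bochner_integral_std_normal_sq_exp[OF a(1)] by (simp add: has_bochner_integral_iff)
  also have "\<dots> \<le> (\<integral>x. x * x * quarter_sech_sq_mean c x \<partial>std_normal_measure)"
  proof (rule integral_mono)
    show "integrable std_normal_measure (\<lambda>x. x * x * exp (- a * x\<^sup>2) / 4)"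
      using has_bochner_integral_std_normal_sq_exp[OF a(1)] by (simp add: has_bochner_integral_iff)
    fix x :: real
    have "exp (- a * x\<^sup>2) / 4 \<le> quarter_sech_sq_mean c x"
      using quarter_sech_sq_mean_ge[of c x] by (simp add: a_def power_mult_distrib)
    then show "x * x * exp (- a * x\<^sup>2) / 4 \<le> x * x * quarter_sech_sq_mean c x"
      by (simp add: mult_left_mono flip: times_divide_eq_right)
  qed (rule integrable_std_normal_sq_quarter_sech_sq_mean)
  finally show ?thesis .
qed

lemma integral_gauss_d_component:
  fixes f :: "real \<Rightarrow> real"
  assumes "i < d" "f \<in> borel_measurable borel"
  shows "(\<integral>V. f (V i) \<partial>gauss_d d) = integral\<^sup>L std_normal_measure f"
proof -
  have "distr (gauss_d d) std_normal_measure (\<lambda>V. V i) = std_normal_measure"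
    unfolding gauss_d_def using assms(1)
    by (intro distr_PiM_component prob_space_std_normal_measure) auto
  moreover have "(\<lambda>V. V i) \<in> measurable (gauss_d d) std_normal_measure"
    unfolding gauss_d_def using assms(1) by (intro measurable_component_singleton) auto
  ultimately show ?thesis
    using assms(2) integral_distr[of "\<lambda>V. V i" "gauss_d d" std_normal_measure f] by simp
qed

lemma integral_gauss_d_two_components:
  fixes f g :: "real \<Rightarrow> real"
  assumes "i < d" "k < d" "i \<noteq> k"
    and "integrable std_normal_measure f" "integrable std_normal_measure g"
  shows "(\<integral>V. f (V i) * g (V k) \<partial>gauss_d d)
    = integral\<^sup>L std_normal_measure f * integral\<^sup>L std_normal_measure g"
proof -
  interpret product_sigma_finite "\<lambda>_. std_normal_measure"
    unfolding product_sigma_finite_def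
    using prob_space_imp_sigma_finite[OF prob_space_std_normal_measure] by simp
  interpret prob_space std_normal_measure
    by (rule prob_space_std_normal_measure)
  define h where "h l = (if l = i then f else if l = k then g else (\<lambda>_. 1))" for l
  have prod_ik: "(\<Prod>l<d. F l) = F i * F k" if "\<And>l. l \<noteq> i \<Longrightarrow> l \<noteq> k \<Longrightarrow> F l = 1"
    for F :: "nat \<Rightarrow> real"
  proof -
    have "(\<Prod>l<d. F l) = (\<Prod>l\<in>{i, k}. F l)"
      by (rule prod.mono_neutral_right) (use assms that in auto)
    then show ?thesis
      using assms(3) by simp
  qed
  have "(\<integral>V. f (V i) * g (V k) \<partial>gauss_d d) = (\<integral>V. (\<Prod>l<d. h l (V l)) \<partial>gauss_d d)"
    using assms(3) by (subst prod_ik) (auto simp: h_def)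
  also have "\<dots> = (\<Prod>l<d. integral\<^sup>L std_normal_measure (h l))"
    unfolding gauss_d_def using assms(4,5)
    by (intro product_integral_prod) (auto simp: h_def)
  also have "\<dots> = integral\<^sup>L std_normal_measure f * integral\<^sup>L std_normal_measure g"
    using assms(3) by (subst prod_ik) (auto simp: h_def prob_space)
  finally show ?thesis .
qed

lemma F_entry_eq_integral_quarter_sech_sq_mean:
  "F_entry d \<sigma> \<theta> j k
    = (\<integral>V. V j * V k * quarter_sech_sq_mean (norm_d d \<theta> / \<sigma>) (V 0) \<partial>gauss_d d)"
  unfolding F_entry_def quarter_sech_sq_mean_def
proof (intro Bochner_Integration.integral_cong refl)
  fix V :: "nat \<Rightarrow> real"
  have "V j * V k / (exp (- u * norm_d d \<theta> * V 0 / \<sigma>) + exp (u * norm_d d \<theta> * V 0 / \<sigma>))\<^sup>2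
      = V j * V k * quarter_sech_sq (u * (norm_d d \<theta> / \<sigma>) * V 0)" for u
    by (simp add: quarter_sech_sq_def)
  then show "(LBINT u=0..1. V j * V k
        / (exp (- u * norm_d d \<theta> * V 0 / \<sigma>) + exp (u * norm_d d \<theta> * V 0 / \<sigma>))\<^sup>2)
      = V j * V k * (LBINT u=0..1. quarter_sech_sq (u * (norm_d d \<theta> / \<sigma>) * V 0))"
    by (simp only: interval_lebesgue_integral_mult_right)
qed

lemma F_entry_00_eq:
  assumes "0 < d"
  shows "F_entry d \<sigma> \<theta> 0 0
    = (\<integral>x. x * x * quarter_sech_sq_mean (norm_d d \<theta> / \<sigma>) x \<partial>std_normal_measure)"
proof -
  have "F_entry d \<sigma> \<theta> 0 0
      = (\<integral>V. (\<lambda>x. x * x * quarter_sech_sq_mean (norm_d d \<theta> / \<sigma>) x) (V 0) \<partial>gauss_d d)"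
    by (simp add: F_entry_eq_integral_quarter_sech_sq_mean)
  also have "\<dots> = (\<integral>x. x * x * quarter_sech_sq_mean (norm_d d \<theta> / \<sigma>) x \<partial>std_normal_measure)"
    using assms by (intro integral_gauss_d_component) simp_all
  finally show ?thesis .
qed

lemma F_entry_diag_eq:
  assumes "0 < j" "j < d"
  shows "F_entry d \<sigma> \<theta> j j
    = integral\<^sup>L std_normal_measure (quarter_sech_sq_mean (norm_d d \<theta> / \<sigma>))"
proof -
  define m where "m = quarter_sech_sq_mean (norm_d d \<theta> / \<sigma>)"
  have "F_entry d \<sigma> \<theta> j j = (\<integral>V. m (V 0) * (V j * V j) \<partial>gauss_d d)"
    by (simp add: F_entry_eq_integral_quarter_sech_sq_mean m_def mult.commute)
  also have "\<dots> = integral\<^sup>L std_normal_measure m * (\<integral>x. x * x \<partial>std_normal_measure)"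
    using assms
    by (intro integral_gauss_d_two_components)
      (auto simp: m_def integrable_std_normal_sq integrable_std_normal_quarter_sech_sq_mean)
  finally show ?thesis
    by (simp add: integral_std_normal_sq m_def)
qed

theorem lemma3:
  fixes d :: nat and \<sigma> :: real and \<theta> :: "nat \<Rightarrow> real" and j :: nat
  assumes "d \<ge> 1" and "\<sigma> > 0"
    and "(norm_d d \<theta>)\<^sup>2 \<le> 5 * \<sigma>\<^sup>2 / 8"
    and "j < d"
  shows "F_entry d \<sigma> \<theta> j j \<ge> F_entry d \<sigma> \<theta> 0 0
       \<and> F_entry d \<sigma> \<theta> 0 0 \<ge> 1 / (4 * (1 + 2 * (norm_d d \<theta>)\<^sup>2 / \<sigma>\<^sup>2))"
proof -
  define c where "c = norm_d d \<theta> / \<sigma>"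
  have F_00: "F_entry d \<sigma> \<theta> 0 0 = (\<integral>x. x * x * quarter_sech_sq_mean c x \<partial>std_normal_measure)"
    using assms(1) by (simp add: F_entry_00_eq c_def)
  have "F_entry d \<sigma> \<theta> 0 0 \<le> F_entry d \<sigma> \<theta> j j"
  proof (cases "j = 0")
    case False
    then show ?thesis
      using assms(4) unfolding F_00
      by (simp add: F_entry_diag_eq c_def integral_std_normal_sq_mult_le
          integrable_std_normal_quarter_sech_sq_mean integrable_std_normal_sq_quarter_sech_sq_mean
          quarter_sech_sq_mean_antimono)
  qed simp
  moreover have "1 / (4 * (1 + 2 * c\<^sup>2)) \<le> F_entry d \<sigma> \<theta> 0 0"
    unfolding F_00 using assms(2,3)
    by (intro integral_std_normal_sq_quarter_sech_sq_mean_ge) (simp add: c_def power_divide pos_divide_le_eq)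
  moreover have "1 + 2 * (norm_d d \<theta>)\<^sup>2 / \<sigma>\<^sup>2 = 1 + 2 * c\<^sup>2"
    by (simp add: c_def power_divide)
  ultimately show ?thesis
    by simp
qed

end
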